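(* Let $\mathbb{X}$ be a real or complex Banach algebra with identity, $\mathcal{G}$ its group of units, $k\ge1$ an integer, and $g_n:\mathbb{X}\to\mathbb{X}$ ($n\ge0$) functions with $|g_n(\xi)|\le\sigma|\xi|$ for all $\xi\in\mathbb{X}$, all $n$, for some real $\sigma>0$. Let $a\in\mathcal{G}$ and $b_0,\dots,b_k\in\mathbb{X}$ with $b_k\ne0$. If $|a|<1$, $$b_0a^k+b_1a^{k-1}+\cdots+b_{k-1}a+b_k=0,$$ and $$\sum_{i=0}^{k-1}\big|b_0a^i+b_1a^{i-1}+\cdots+b_i\big|<\frac1\sigma,$$ then every solution of $$x_{n+1}=ax_n+g_n\big(b_0x_n+b_1x_{n-1}+\cdots+b_kx_{n-k}\big),\quad n\ge0,$$ with initial values in $\mathbb{X}$ converges to $0$.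
   Context: A Banach algebra with identity is a Banach space $\mathbb{X}$ (norm $|\cdot|$) with an associative bilinear multiplication satisfying $|xy|\le|x||y|$ and identity $1$ with $|1|=1$; $\mathcal{G}$ is the set of invertible elements. *)

theory Defs
  imports "HOL-Analysis.Analysis"
begin

definition invertible_elem :: "'a::ring_1 \<Rightarrow> bool" where
  "invertible_elem a \<longleftrightarrow> (\<exists>c. a * c = 1 \<and> c * a = 1)"

end

theory Submission
  imports Defs
begin

(*
  Writing u(n) = g_n(y(n)), the recurrence is x(n+1) = a x(n) + u(n).  Unrolling it k times
  expresses the window sum y(n) through c_k x(n-k) and the forcing terms u(n-1), ..., u(n-k);
  since c_k = 0 (the characteristic equation), y(n) = sum_{i<k} c_i u(n-1-i).  Taking norms,
  |y(n)| <= sum_{i<k} sigma |c_i| |y(n-1-i)|, a delay inequality with total weight < 1, whence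
  |y(n)| decays geometrically (in blocks of length k).  Hence u(n) -> 0, and x, being driven
  by the contraction a with vanishing forcing, tends to 0 as well.
*)

text \<open>The partial characteristic sums c_i; the characteristic equation says c_k = 0.\<close>
definition partial_char :: "'a::ring_1 \<Rightarrow> (nat \<Rightarrow> 'a) \<Rightarrow> nat \<Rightarrow> 'a" where
  "partial_char a b i = (\<Sum>j=0..i. b j * a ^ (i - j))"

lemma partial_char_Suc:
  "partial_char a b (Suc i) = partial_char a b i * a + b (Suc i)"
proof -
  have "partial_char a b (Suc i) = (\<Sum>j=0..i. b j * a ^ (Suc i - j)) + b (Suc i)"
    unfolding partial_char_def by (simp add: sum.atLeast0_atMost_Suc)
  also have "(\<Sum>j=0..i. b j * a ^ (Suc i - j)) = (\<Sum>j=0..i. b j * a ^ (i - j) * a)"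
    by (rule sum.cong) (auto simp: Suc_diff_le mult.assoc power_commutes)
  also have "\<dots> = partial_char a b i * a"
    unfolding partial_char_def by (simp add: sum_distrib_right)
  finally show ?thesis .
qed

lemma window_sum_unroll:
  fixes a :: "'a::ring_1" and x :: "int \<Rightarrow> 'a" and u :: "nat \<Rightarrow> 'a"
  assumes rec: "\<And>n::nat. x (int n + 1) = a * x (int n) + u n"
  shows "(\<Sum>j=0..K. b j * x (int (m + K) - int j)) =
     partial_char a b K * x (int m) + (\<Sum>i<K. partial_char a b i * u (m + K - 1 - i))"
proof (induction K arbitrary: m)
  case 0
  then show ?case by (simp add: partial_char_def)
next
  case (Suc K)
  let ?c = "partial_char a b"
  have "(\<Sum>j=0..Suc K. b j * x (int (m + Suc K) - int j)) =
      (\<Sum>j=0..K. b j * x (int (Suc m + K) - int j)) + b (Suc K) * x (int m)"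
    by (simp add: sum.atLeast0_atMost_Suc)
  also have "(\<Sum>j=0..K. b j * x (int (Suc m + K) - int j)) =
      ?c K * x (int (Suc m)) + (\<Sum>i<K. ?c i * u (m + Suc K - 1 - i))"
    using Suc.IH[of "Suc m"] by simp
  also have "x (int (Suc m)) = a * x (int m) + u m"
    using rec[of m] by (simp add: add.commute)
  finally have "(\<Sum>j=0..Suc K. b j * x (int (m + Suc K) - int j)) =
      (?c K * a + b (Suc K)) * x (int m)
        + ((\<Sum>i<K. ?c i * u (m + Suc K - 1 - i)) + ?c K * u (m + Suc K - 1 - K))"
    by (simp add: algebra_simps)
  then show ?case by (simp add: partial_char_Suc)
qed

lemma window_sum_eq_convolution:
  fixes a :: "'a::ring_1" and x :: "int \<Rightarrow> 'a" and u :: "nat \<Rightarrow> 'a"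
  assumes rec: "\<And>n::nat. x (int n + 1) = a * x (int n) + u n"
    and char: "partial_char a b k = 0"
    and n: "k \<le> n"
  shows "(\<Sum>j=0..k. b j * x (int n - int j)) = (\<Sum>i<k. partial_char a b i * u (n - 1 - i))"
  using window_sum_unroll[OF rec, where K=k and m="n - k"] char n by simp

lemma delay_ineq_geometric_bound:
  fixes Y w :: "nat \<Rightarrow> real" and k :: nat
  assumes k: "k \<ge> 1" and Y0: "\<And>n. Y n \<ge> 0" and w0: "\<And>i. w i \<ge> 0"
    and w1: "(\<Sum>i<k. w i) < 1"
    and rec: "\<And>n. k \<le> n \<Longrightarrow> Y n \<le> (\<Sum>i<k. w i * Y (n - 1 - i))"
  shows "Y n \<le> (\<Sum>m<k. Y m) * (\<Sum>i<k. w i) ^ (n div k)"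
proof (induction n rule: less_induct)
  case (less n)
  define \<theta> where "\<theta> = (\<Sum>i<k. w i)"
  define M where "M = (\<Sum>m<k. Y m)"
  have \<theta>0: "\<theta> \<ge> 0" and M0: "M \<ge> 0"
    unfolding \<theta>_def M_def using w0 Y0 by (simp_all add: sum_nonneg)
  show ?case
  proof (cases "n < k")
    case True
    then have "Y n \<le> M"
      unfolding M_def using member_le_sum[of n "{..<k}" Y] Y0 by auto
    then show ?thesis using True by (simp add: M_def)
  next
    case False
    then have nk: "k \<le> n" by simp
    have "Y n \<le> (\<Sum>i<k. w i * Y (n - 1 - i))" using rec nk by simp
    also have "\<dots> \<le> (\<Sum>i<k. w i * (M * \<theta> ^ (n div k - 1)))"
    proof (rule sum_mono)
      fix i assume i: "i \<in> {..<k}"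
      have "n div k - 1 = (n - k) div k" using nk k by (simp add: le_div_geq)
      also have "\<dots> \<le> (n - 1 - i) div k" using i nk by (intro div_le_mono) auto
      finally have "\<theta> ^ ((n - 1 - i) div k) \<le> \<theta> ^ (n div k - 1)"
        using \<theta>0 w1 by (intro power_decreasing) (auto simp: \<theta>_def)
      moreover have "Y (n - 1 - i) \<le> M * \<theta> ^ ((n - 1 - i) div k)"
        using less.IH[of "n - 1 - i"] nk k by (simp add: M_def \<theta>_def)
      ultimately have "Y (n - 1 - i) \<le> M * \<theta> ^ (n div k - 1)"
        using M0 by (meson order_trans mult_left_mono)
      then show "w i * Y (n - 1 - i) \<le> w i * (M * \<theta> ^ (n div k - 1))"
        using w0 by (simp add: mult_left_mono)
    qed
    also have "\<dots> = \<theta> * (M * \<theta> ^ (n div k - 1))"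
      unfolding \<theta>_def by (rule sum_distrib_right[symmetric])
    also have "\<dots> = M * (\<theta> * \<theta> ^ (n div k - 1))" by (simp add: algebra_simps)
    also have "\<theta> * \<theta> ^ (n div k - 1) = \<theta> ^ (n div k)"
    proof -
      have "0 < n div k" using nk k by (simp add: div_greater_zero_iff)
      then show ?thesis by (cases "n div k") simp_all
    qed
    finally show ?thesis by (simp add: M_def \<theta>_def)
  qed
qed

lemma delay_ineq_tendsto_zero:
  fixes Y w :: "nat \<Rightarrow> real" and k :: nat
  assumes k: "k \<ge> 1" and Y0: "\<And>n. Y n \<ge> 0" and w0: "\<And>i. w i \<ge> 0"
    and w1: "(\<Sum>i<k. w i) < 1"
    and rec: "\<And>n. k \<le> n \<Longrightarrow> Y n \<le> (\<Sum>i<k. w i * Y (n - 1 - i))"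
  shows "Y \<longlonglongrightarrow> 0"
proof -
  define \<theta> where "\<theta> = (\<Sum>i<k. w i)"
  have "\<theta> \<ge> 0" unfolding \<theta>_def using w0 by (simp add: sum_nonneg)
  then have "(\<lambda>n. \<theta> ^ (n div k)) \<longlonglongrightarrow> 0"
    using filterlim_compose[OF LIMSEQ_power_zero filterlim_at_top_div_const_nat, of \<theta> k]
      w1 k by (simp add: \<theta>_def)
  then have "(\<lambda>n. (\<Sum>m<k. Y m) * \<theta> ^ (n div k)) \<longlonglongrightarrow> 0"
    by (rule tendsto_mult_right_zero)
  then show ?thesis
    by (rule Lim_null_comparison[rotated])
      (use delay_ineq_geometric_bound[OF assms] Y0 in \<open>auto simp: \<theta>_def\<close>)
qed

text \<open>A nonnegative sequence satisfying Z(n+1) <= q Z(n) + e(n) with 0 <= q < 1 and e -> 0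
  tends to zero: after e is below r(1-q)/2, Z stays within r/2 of a decaying geometric term.\<close>
lemma perturbed_contraction_tendsto_zero:
  fixes Z e :: "nat \<Rightarrow> real" and q :: real
  assumes Z0: "\<And>n. Z n \<ge> 0" and q0: "q \<ge> 0" and q1: "q < 1"
    and e: "e \<longlonglongrightarrow> 0"
    and rec: "\<And>n. Z (Suc n) \<le> q * Z n + e n"
  shows "Z \<longlonglongrightarrow> 0"
proof (rule LIMSEQ_I)
  fix r :: real assume r: "0 < r"
  obtain N where N: "\<And>n. n \<ge> N \<Longrightarrow> norm (e n - 0) < r * (1 - q) / 2"
    using LIMSEQ_D[OF e, of "r * (1 - q) / 2"] r q1 by auto
  have tail: "Z (N + i) \<le> q ^ i * Z N + r / 2" for i
  proof (induction i)
    case 0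
    then show ?case using r by simp
  next
    case (Suc i)
    have "Z (N + Suc i) \<le> q * Z (N + i) + r * (1 - q) / 2"
      using rec[of "N + i"] N[of "N + i"] by auto
    also have "\<dots> \<le> q * (q ^ i * Z N + r / 2) + r * (1 - q) / 2"
      using Suc.IH q0 by (simp add: mult_left_mono)
    also have "\<dots> = q ^ Suc i * Z N + r / 2" by (simp add: field_simps)
    finally show ?case .
  qed
  have "(\<lambda>i. q ^ i * Z N) \<longlonglongrightarrow> 0"
    using LIMSEQ_power_zero[of q] q0 q1 tendsto_mult_left_zero by auto
  then obtain N' where N': "\<And>i. i \<ge> N' \<Longrightarrow> norm (q ^ i * Z N - 0) < r / 2"
    using LIMSEQ_D[of _ 0 "r / 2"] r by (metis half_gt_zero)
  show "\<exists>n0. \<forall>n\<ge>n0. norm (Z n - 0) < r"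
  proof (intro exI allI impI)
    fix n assume n: "N + N' \<le> n"
    have "Z n \<le> q ^ (n - N) * Z N + r / 2"
      using tail[of "n - N"] n by simp
    moreover have "\<bar>q ^ (n - N) * Z N\<bar> < r / 2" using N'[of "n - N"] n by simp
    ultimately show "norm (Z n - 0) < r" using Z0[of n] by simp
  qed
qed

lemma window_sum_delay_ineq:
  fixes a :: "'a::real_normed_algebra_1" and x :: "int \<Rightarrow> 'a" and u :: "nat \<Rightarrow> 'a"
  assumes rec: "\<And>n::nat. x (int n + 1) = a * x (int n) + u n"
    and char: "partial_char a b k = 0"
    and u_bound: "\<And>n. norm (u n) \<le> \<sigma> * norm (\<Sum>j=0..k. b j * x (int n - int j))"
    and n: "k \<le> n"
  shows "norm (\<Sum>j=0..k. b j * x (int n - int j)) \<le>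
    (\<Sum>i<k. \<sigma> * norm (partial_char a b i) * norm (\<Sum>j=0..k. b j * x (int (n - 1 - i) - int j)))"
proof -
  let ?c = "partial_char a b" and ?y = "\<lambda>m. \<Sum>j=0..k. b j * x (int m - int j)"
  have "norm (?y n) = norm (\<Sum>i<k. ?c i * u (n - 1 - i))"
    using window_sum_eq_convolution[OF rec char n] by simp
  also have "\<dots> \<le> (\<Sum>i<k. norm (?c i * u (n - 1 - i)))"
    by (rule norm_sum)
  also have "\<dots> \<le> (\<Sum>i<k. \<sigma> * norm (?c i) * norm (?y (n - 1 - i)))"
  proof (rule sum_mono)
    fix i
    have "norm (?c i * u (n - 1 - i)) \<le> norm (?c i) * norm (u (n - 1 - i))"
      by (rule norm_mult_ineq)
    also have "\<dots> \<le> norm (?c i) * (\<sigma> * norm (?y (n - 1 - i)))"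
      using u_bound by (simp add: mult_left_mono)
    finally show "norm (?c i * u (n - 1 - i)) \<le> \<sigma> * norm (?c i) * norm (?y (n - 1 - i))"
      by (simp add: algebra_simps)
  qed
  finally show ?thesis .
qed

lemma contraction_forced_tendsto_zero:
  fixes a :: "'a::real_normed_algebra_1" and x :: "int \<Rightarrow> 'a" and u :: "nat \<Rightarrow> 'a"
  assumes rec: "\<And>n::nat. x (int n + 1) = a * x (int n) + u n"
    and a_small: "norm a < 1"
    and u: "(\<lambda>n. norm (u n)) \<longlonglongrightarrow> 0"
  shows "(\<lambda>n. x (int n)) \<longlonglongrightarrow> 0"
proof -
  have "norm (x (int (Suc n))) \<le> norm a * norm (x (int n)) + norm (u n)" for n
    using rec[of n] norm_triangle_ineq[of "a * x (int n)" "u n"] norm_mult_ineq[of a "x (int n)"]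
    by (simp add: add.commute)
  then have "(\<lambda>n. norm (x (int n))) \<longlonglongrightarrow> 0"
    using perturbed_contraction_tendsto_zero[of "\<lambda>n. norm (x (int n))" "norm a"] a_small u
    by auto
  then show ?thesis by (simp add: tendsto_norm_zero_iff)
qed

theorem corollary1:
  fixes a :: "'a::{real_normed_algebra_1, banach}"
    and b :: "nat \<Rightarrow> 'a"
    and g :: "nat \<Rightarrow> 'a \<Rightarrow> 'a"
    and k :: nat and \<sigma> :: real
    and x :: "int \<Rightarrow> 'a"
  assumes k: "k \<ge> 1"
    and sigma: "\<sigma> > 0"
    and g_bound: "\<And>n \<xi>. norm (g n \<xi>) \<le> \<sigma> * norm \<xi>"
    and a_inv: "invertible_elem a"
    and bk: "b k \<noteq> 0"
    and a_small: "norm a < 1"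
    and char_eq: "(\<Sum>j=0..k. b j * a ^ (k - j)) = 0"
    and sum_small: "(\<Sum>i<k. norm (\<Sum>j=0..i. b j * a ^ (i - j))) < 1 / \<sigma>"
    and rec: "\<And>n::nat. x (int n + 1) =
                 a * x (int n) + g n (\<Sum>j=0..k. b j * x (int n - int j))"
  shows "(\<lambda>n. x (int n)) \<longlonglongrightarrow> 0"
proof -
  define y where "y = (\<lambda>n::nat. \<Sum>j=0..k. b j * x (int n - int j))"
  define u where "u = (\<lambda>n. g n (y n))"
  have rec_u: "\<And>n::nat. x (int n + 1) = a * x (int n) + u n"
    using rec unfolding u_def y_def by simp
  have u_bound: "norm (u n) \<le> \<sigma> * norm (y n)" for n
    using g_bound unfolding u_def by simp
  have char: "partial_char a b k = 0"
    using char_eq by (simp add: partial_char_def)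
  have weights_small: "(\<Sum>i<k. \<sigma> * norm (partial_char a b i)) < 1"
    using sum_small sigma
    by (simp add: partial_char_def sum_distrib_left[symmetric] field_simps)
  have "(\<lambda>n. norm (y n)) \<longlonglongrightarrow> 0"
  proof (rule delay_ineq_tendsto_zero[OF k _ _ weights_small])
    show "norm (y n) \<le> (\<Sum>i<k. \<sigma> * norm (partial_char a b i) * norm (y (n - 1 - i)))"
      if "k \<le> n" for n
      using window_sum_delay_ineq[OF rec_u char _ that] u_bound unfolding y_def by blast
  qed (use sigma in auto)
  then have "(\<lambda>n. \<sigma> * norm (y n)) \<longlonglongrightarrow> 0" by (rule tendsto_mult_right_zero)
  then have "(\<lambda>n. norm (u n)) \<longlonglongrightarrow> 0"
    by (rule Lim_null_comparison[rotated]) (simp add: u_bound)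
  then show ?thesis by (rule contraction_forced_tendsto_zero[OF rec_u a_small])
qed

end
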